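(* Consider pairs $C\in\mathbb{F}_p^n$, $C\neq 0$, and $(d_1,\dots,d_n)\in\mathbb{F}_p^n$ satisfying $\sum_jM_jC_j=0$, $\Omega^M_jC=d_jC$ for $j=1,\dots,n-1$, and $d_n=0$. For such a pair, $(d_1,\dots,d_n)$ is uniquely determined by $C$; for $c\in\mathbb{F}_p^\times$ the pair $cC,(d_1,\dots,d_n)$ is again such a pair; and the number of equivalence classes of such pairs modulo $C\mapsto cC$ equals $n-1$ minus the number of indices $i$ with $1\le i\le n-2$ and $\sum_{j=i+1}^nM_j=0$ in $\mathbb{F}_p$.
   Context: $p$ is an odd prime, $n\ge2$, and $M_1,\dots,M_n$ are integers with $1\le M_i\le p-1$, viewed in $\mathbb{F}_p$. For $j\ne l$, $\Omega^M_{jl}$ is the $n\times n$ matrix over $\mathbb{F}_p$ with only nonzero entries $(\Omega^M_{jl})_{jj}=M_l$, $(\Omega^M_{jl})_{jl}=-M_l$, $(\Omega^M_{jl})_{lj}=-M_j$, $(\Omega^M_{jl})_{ll}=M_j$; $\Omega^M_j=\sum_{l=j+1}^n\Omega^M_{jl}$; $C$ is a column vector. *)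

theory Defs
  imports Main "Berlekamp_Zassenhaus.Finite_Field"
begin

text \<open>Vectors in F^n are functions nat => F, indices 1..n, zero outside.
  Matrices are functions nat => nat => F, indices 1..n.\<close>

definition vecs :: "nat \<Rightarrow> (nat \<Rightarrow> 'f::zero) set" where
  "vecs n = {v. \<forall>i. i \<notin> {1..n} \<longrightarrow> v i = 0}"

definition mat_vec :: "nat \<Rightarrow> (nat \<Rightarrow> nat \<Rightarrow> 'f::comm_ring_1) \<Rightarrow> (nat \<Rightarrow> 'f) \<Rightarrow> (nat \<Rightarrow> 'f)" where
  "mat_vec n A v = (\<lambda>a. if a \<in> {1..n} then (\<Sum>b=1..n. A a b * v b) else 0)"

definition OmegaM_jl :: "(nat \<Rightarrow> nat) \<Rightarrow> nat \<Rightarrow> nat \<Rightarrow> nat \<Rightarrow> nat \<Rightarrow> 'f::comm_ring_1" where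
  "OmegaM_jl M j l = (\<lambda>a b.
     if a = j \<and> b = j then of_nat (M l)
     else if a = j \<and> b = l then - of_nat (M l)
     else if a = l \<and> b = j then - of_nat (M j)
     else if a = l \<and> b = l then of_nat (M j)
     else 0)"

definition OmegaM_j :: "nat \<Rightarrow> (nat \<Rightarrow> nat) \<Rightarrow> nat \<Rightarrow> nat \<Rightarrow> nat \<Rightarrow> 'f::comm_ring_1" where
  "OmegaM_j n M j = (\<lambda>a b. \<Sum>l\<in>{j+1..n}. OmegaM_jl M j l a b)"

definition admissible_pairs :: "nat \<Rightarrow> (nat \<Rightarrow> nat) \<Rightarrow> ((nat \<Rightarrow> 'f::field) \<times> (nat \<Rightarrow> 'f)) set" where
  "admissible_pairs n M = {(C, d). C \<in> vecs n \<and> d \<in> vecs n \<and> C \<noteq> (\<lambda>_. 0)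
      \<and> (\<Sum>j=1..n. of_nat (M j) * C j) = 0
      \<and> (\<forall>j\<in>{1..n-1}. mat_vec n (OmegaM_j n M j) C = (\<lambda>a. d j * C a))
      \<and> d n = 0}"

definition scaling_rel :: "nat \<Rightarrow> (nat \<Rightarrow> nat) \<Rightarrow> (((nat \<Rightarrow> 'f::field) \<times> (nat \<Rightarrow> 'f)) \<times> ((nat \<Rightarrow> 'f) \<times> (nat \<Rightarrow> 'f))) set" where
  "scaling_rel n M = {((C, d), (C', d')). (C, d) \<in> admissible_pairs n M \<and> (C', d') \<in> admissible_pairs n M
      \<and> d' = d \<and> (\<exists>c. c \<noteq> 0 \<and> C' = (\<lambda>a. c * C a))}"

end

theory Submission
  imports Defs
begin

text \<open>Componentwise, row j of Omega_j C is the sum over l > j of M_l (C_j - C_l), row a > j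
  is M_j (C_a - C_j), and the rows a < j vanish. Let k be the first index with C_k \<noteq> 0.
  Row k of the eigen-equation for j = k + 1 gives d_(k+1) = 0, and then its rows a > k + 1
  make C constant on k + 1, ..., n. The linear condition becomes M_k C_k + T_k C_(k+1) = 0
  with T_k the sum of the M_l for l > k, so T_k \<noteq> 0 and C is C_k times a canonical vector
  depending only on k. Conversely every k \<le> n - 1 with T_k \<noteq> 0 gives an admissible pair, so
  the classes correspond to these k. Since T_(n-1) = M_n \<noteq> 0, their number is n - 1 minus
  the number of i \<le> n - 2 with T_i = 0.\<close>

abbreviation tail_weight :: "nat \<Rightarrow> (nat \<Rightarrow> nat) \<Rightarrow> nat \<Rightarrow> 'f::comm_ring_1" where
  "tail_weight n M k \<equiv> \<Sum>l=k+1..n. of_nat (M l)"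

definition OmegaM_j_mult ::
    "nat \<Rightarrow> (nat \<Rightarrow> nat) \<Rightarrow> nat \<Rightarrow> (nat \<Rightarrow> 'f::comm_ring_1) \<Rightarrow> nat \<Rightarrow> 'f" where
  "OmegaM_j_mult n M j C a =
     (if a = j then \<Sum>l=j+1..n. of_nat (M l) * (C j - C l)
      else if j < a then of_nat (M j) * (C a - C j) else 0)"

lemma sum_OmegaM_jl_mult:
  fixes C :: "nat \<Rightarrow> 'f::comm_ring_1"
  assumes "j \<in> {1..n}" "l \<in> {1..n}" "j \<noteq> l"
  shows "(\<Sum>b=1..n. OmegaM_jl M j l a b * C b) =
    (if a = j then of_nat (M l) * (C j - C l)
     else if a = l then of_nat (M j) * (C l - C j) else 0)"
proof -
  have "(\<Sum>b=1..n. OmegaM_jl M j l a b * C b) = (\<Sum>b\<in>{j, l}. OmegaM_jl M j l a b * C b)"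
    by (rule sum.mono_neutral_right) (use assms in \<open>auto simp: OmegaM_jl_def\<close>)
  then show ?thesis
    using assms by (auto simp: OmegaM_jl_def algebra_simps)
qed

lemma mat_vec_OmegaM_j:
  fixes C :: "nat \<Rightarrow> 'f::comm_ring_1"
  assumes j: "j \<in> {1..n}" and a: "a \<in> {1..n}"
  shows "mat_vec n (OmegaM_j n M j) C a = OmegaM_j_mult n M j C a"
proof -
  have "mat_vec n (OmegaM_j n M j) C a = (\<Sum>l=j+1..n. \<Sum>b=1..n. OmegaM_jl M j l a b * C b)"
    using a by (simp add: mat_vec_def OmegaM_j_def sum_distrib_right)
       (rule sum.swap)
  also have "\<dots> = (\<Sum>l=j+1..n. if a = j then of_nat (M l) * (C j - C l)
                     else if a = l then of_nat (M j) * (C l - C j) else 0)"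
    by (intro sum.cong refl sum_OmegaM_jl_mult) (use j in auto)
  also have "\<dots> = OmegaM_j_mult n M j C a"
    using a by (cases "a = j") (auto simp: OmegaM_j_mult_def)
  finally show ?thesis .
qed

lemma mat_vec_eq_scaled_iff:
  assumes "v \<in> vecs n"
  shows "mat_vec n A v = (\<lambda>a. e * v a) \<longleftrightarrow> (\<forall>a\<in>{1..n}. mat_vec n A v a = e * v a)"
  using assms by (auto simp: fun_eq_iff mat_vec_def vecs_def)

lemma mat_vec_scaled: "mat_vec n A (\<lambda>a. c * v a) = (\<lambda>a. c * mat_vec n A v a)"
  by (auto simp: mat_vec_def fun_eq_iff sum_distrib_left algebra_simps)

lemma admissible_pairs_iff:
  "(C, d) \<in> admissible_pairs n M \<longleftrightarrow>
     C \<in> vecs n \<and> d \<in> vecs n \<and> C \<noteq> (\<lambda>_. 0) \<and> (\<Sum>j=1..n. of_nat (M j) * C j) = 0 \<and> d n = 0 \<and>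
     (\<forall>j\<in>{1..n-1}. \<forall>a\<in>{1..n}. OmegaM_j_mult n M j C a = d j * C a)"
proof -
  have "mat_vec n (OmegaM_j n M j) C = (\<lambda>a. d j * C a) \<longleftrightarrow>
        (\<forall>a\<in>{1..n}. OmegaM_j_mult n M j C a = d j * C a)"
    if "C \<in> vecs n" "j \<in> {1..n-1}" for j
  proof -
    have "\<forall>a\<in>{1..n}. mat_vec n (OmegaM_j n M j) C a = OmegaM_j_mult n M j C a"
      using that(2) by (auto intro: mat_vec_OmegaM_j)
    with that(1) show ?thesis
      by (simp add: mat_vec_eq_scaled_iff)
  qed
  then show ?thesis
    unfolding admissible_pairs_def by auto
qed

lemma admissible_pairs_eigenvalues_unique:
  assumes "(C, d) \<in> (admissible_pairs n M :: ((nat \<Rightarrow> 'f::field) \<times> _) set)"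
    and "(C, d') \<in> admissible_pairs n M"
  shows "d = d'"
proof
  fix j
  from assms obtain a where a: "C a \<noteq> 0"
    by (auto simp: admissible_pairs_def fun_eq_iff)
  show "d j = d' j"
  proof (cases "j \<in> {1..n-1}")
    case True
    then have "d j * C a = d' j * C a"
      using assms unfolding admissible_pairs_def by (auto simp: fun_eq_iff)
    with a show ?thesis by simp
  next
    case False
    then have "j \<notin> {1..n} \<or> j = n" by auto
    with assms show ?thesis by (auto simp: admissible_pairs_def vecs_def)
  qed
qed

lemma admissible_pairs_scaled:
  assumes "(C, d) \<in> (admissible_pairs n M :: ((nat \<Rightarrow> 'f::field) \<times> _) set)" and "c \<noteq> 0"
  shows "((\<lambda>a. c * C a), d) \<in> admissible_pairs n M"
proof -
  have "(\<Sum>j=1..n. of_nat (M j) * (c * C j)) = c * (\<Sum>j=1..n. of_nat (M j) * C j)"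
    by (simp add: sum_distrib_left algebra_simps)
  with assms show ?thesis
    by (auto simp: admissible_pairs_def vecs_def mat_vec_scaled fun_eq_iff)
qed

lemma equiv_scaling_rel:
  "equiv (admissible_pairs n M :: ((nat \<Rightarrow> 'f::field) \<times> _) set) (scaling_rel n M)"
proof (rule equivI)
  show "refl_on (admissible_pairs n M :: ((nat \<Rightarrow> 'f) \<times> _) set) (scaling_rel n M)"
    unfolding refl_on_def scaling_rel_def by (auto intro: exI[of _ 1])
  show "sym (scaling_rel n M :: (((nat \<Rightarrow> 'f) \<times> _) \<times> _) set)"
  proof (rule symI)
    fix x y :: "(nat \<Rightarrow> 'f) \<times> _"
    assume "(x, y) \<in> scaling_rel n M"
    then obtain C d c where "x = (C, d)" "y = (\<lambda>a. c * C a, d)" "c \<noteq> 0"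
      and "x \<in> admissible_pairs n M" "y \<in> admissible_pairs n M"
      unfolding scaling_rel_def by auto
    then show "(y, x) \<in> scaling_rel n M"
      unfolding scaling_rel_def by (auto intro!: exI[of _ "inverse c"])
  qed
  show "trans (scaling_rel n M :: (((nat \<Rightarrow> 'f) \<times> _) \<times> _) set)"
  proof (rule transI)
    fix x y z :: "(nat \<Rightarrow> 'f) \<times> _"
    assume "(x, y) \<in> scaling_rel n M" "(y, z) \<in> scaling_rel n M"
    then obtain C d c c' where "x = (C, d)" "z = (\<lambda>a. c' * (c * C a), d)" "c \<noteq> 0" "c' \<noteq> 0"
      and "x \<in> admissible_pairs n M" "z \<in> admissible_pairs n M"
      unfolding scaling_rel_def by auto
    then show "(x, z) \<in> scaling_rel n M"
      unfolding scaling_rel_def by (auto intro!: exI[of _ "c' * c"] simp: mult.assoc)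
  qed
qed (auto simp: scaling_rel_def)

lemma weighted_tail_sum_eq:
  fixes C :: "nat \<Rightarrow> 'f::comm_ring_1"
  assumes "j < k" "k \<le> n"
    and "\<And>l. j < l \<Longrightarrow> l < k \<Longrightarrow> C l = 0" "\<And>l. k < l \<Longrightarrow> l \<le> n \<Longrightarrow> C l = b"
  shows "(\<Sum>l=j+1..n. of_nat (M l) * C l) = of_nat (M k) * C k + tail_weight n M k * b"
proof -
  have "(\<Sum>l=j+1..n. of_nat (M l) * C l) = (\<Sum>l=k..n. of_nat (M l) * C l)"
    by (rule sum.mono_neutral_right) (use assms in auto)
  also have "\<dots> = of_nat (M k) * C k + (\<Sum>l=k+1..n. of_nat (M l) * C l)"
    using assms(2) by (simp add: sum.atLeast_Suc_atMost)
  also have "(\<Sum>l=k+1..n. of_nat (M l) * C l) = (\<Sum>l=k+1..n. of_nat (M l) * b)"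
    by (rule sum.cong) (use assms in auto)
  finally show ?thesis by (simp add: sum_distrib_right)
qed

definition canonical_vec :: "nat \<Rightarrow> (nat \<Rightarrow> nat) \<Rightarrow> nat \<Rightarrow> nat \<Rightarrow> 'f::field" where
  "canonical_vec n M k =
     (\<lambda>l. if l = k then 1 else if k < l \<and> l \<le> n then - of_nat (M k) / tail_weight n M k else 0)"

definition canonical_eigs :: "nat \<Rightarrow> (nat \<Rightarrow> nat) \<Rightarrow> nat \<Rightarrow> nat \<Rightarrow> 'f::field" where
  "canonical_eigs n M k =
     (\<lambda>j. if 1 \<le> j \<and> j < k then of_nat (M j)
          else if j = k then of_nat (M k) + tail_weight n M k else 0)"

lemma canonical_pair_admissible:
  assumes M_nz: "\<forall>i\<in>{1..n}. (of_nat (M i) :: 'f::field) \<noteq> 0"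
    and k: "k \<in> {1..n-1}" and T_nz: "(tail_weight n M k :: 'f) \<noteq> 0"
  shows "(canonical_vec n M k, canonical_eigs n M k) \<in> (admissible_pairs n M :: ((nat \<Rightarrow> 'f) \<times> _) set)"
proof -
  let ?C = "canonical_vec n M k :: nat \<Rightarrow> 'f" and ?d = "canonical_eigs n M k :: nat \<Rightarrow> 'f"
  let ?b = "- of_nat (M k) / tail_weight n M k :: 'f" and ?T = "tail_weight n M k :: 'f"
  have b_T: "?T * ?b = - of_nat (M k)"
    using T_nz by simp
  have b_nz: "?b \<noteq> 0"
    using M_nz k T_nz by auto
  have tail_sum: "(\<Sum>l=j+1..n. of_nat (M l) * ?C l) = 0" if "j < k" for j
  proof -
    have "(\<Sum>l=j+1..n. of_nat (M l) * ?C l) = of_nat (M k) * ?C k + ?T * ?b"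
      by (rule weighted_tail_sum_eq) (use that k in \<open>auto simp: canonical_vec_def\<close>)
    with b_T show ?thesis by (simp add: canonical_vec_def)
  qed
  have "OmegaM_j_mult n M j ?C a = ?d j * ?C a" if j: "j \<in> {1..n-1}" and a: "a \<in> {1..n}" for j a
  proof (cases j k rule: linorder_cases)
    case less
    have "(\<Sum>l=j+1..n. of_nat (M l) * (?C j - ?C l)) = - (\<Sum>l=j+1..n. of_nat (M l) * ?C l)"
      using less by (simp add: canonical_vec_def sum_negf[symmetric])
    with less j show ?thesis
      using tail_sum[OF less] by (auto simp: OmegaM_j_mult_def canonical_vec_def canonical_eigs_def)
  next
    case equal
    have "(\<Sum>l=k+1..n. of_nat (M l) * (?C k - ?C l)) = ?T * (1 - ?b)"
      by (simp add: canonical_vec_def sum_distrib_right)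
    with equal a b_T b_nz show ?thesis
      by (auto simp: OmegaM_j_mult_def canonical_vec_def canonical_eigs_def algebra_simps)
  next
    case greater
    with j a show ?thesis
      by (auto simp: OmegaM_j_mult_def canonical_vec_def canonical_eigs_def)
  qed
  moreover have "?C \<in> vecs n" "?d \<in> vecs n" "?C \<noteq> (\<lambda>_. 0)" "?d n = 0"
    using k by (auto simp: vecs_def canonical_vec_def canonical_eigs_def fun_eq_iff)
  moreover have "(\<Sum>j=1..n. of_nat (M j) * ?C j) = 0"
    using tail_sum[of 0] k by simp
  ultimately show ?thesis
    unfolding admissible_pairs_iff by blast
qed

lemma admissible_tail_constant:
  assumes adm: "(C, d) \<in> (admissible_pairs n M :: ((nat \<Rightarrow> 'f::field) \<times> _) set)"
    and M_nz: "(of_nat (M (k+1)) :: 'f) \<noteq> 0" and C_k: "C k \<noteq> 0" and l: "k + 1 < l" "l \<le> n"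
  shows "C l = C (k+1)"
proof -
  from adm have C: "C \<in> vecs n"
    and rows: "\<forall>j\<in>{1..n-1}. \<forall>a\<in>{1..n}. OmegaM_j_mult n M j C a = d j * C a"
    by (auto simp: admissible_pairs_iff)
  have k: "k \<in> {1..n}"
    using C C_k by (auto simp: vecs_def)
  have j: "k + 1 \<in> {1..n-1}"
    using l by auto
  have "d (k+1) * C k = 0"
    using bspec[OF bspec[OF rows j] k] by (simp add: OmegaM_j_mult_def)
  with C_k have "d (k+1) = 0" by simp
  moreover have "of_nat (M (k+1)) * (C l - C (k+1)) = d (k+1) * C l"
    using bspec[OF bspec[OF rows j], of l] l by (simp add: OmegaM_j_mult_def)
  ultimately show ?thesis
    using M_nz by simp
qed

lemma admissible_pair_canonical_form:
  assumes M_nz: "\<forall>i\<in>{1..n}. (of_nat (M i) :: 'f::field) \<noteq> 0"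
    and adm: "(C, d) \<in> (admissible_pairs n M :: ((nat \<Rightarrow> 'f) \<times> _) set)"
    and lead: "C k \<noteq> 0" "\<forall>l<k. C l = 0"
  shows "k \<in> {1..n-1}" and "(tail_weight n M k :: 'f) \<noteq> 0"
    and "C = (\<lambda>a. C k * canonical_vec n M k a)"
proof -
  let ?T = "tail_weight n M k :: 'f"
  from adm have C: "C \<in> vecs n" and lin: "(\<Sum>j=1..n. of_nat (M j) * C j) = 0"
    by (auto simp: admissible_pairs_iff)
  have k: "k \<in> {1..n}"
    using C lead(1) by (auto simp: vecs_def)
  have const: "C l = C (k+1)" if "k < l" "l \<le> n" for l
    using admissible_tail_constant[OF adm _ lead(1), of l] M_nz that
    by (cases "l = k + 1") auto
  have "(\<Sum>j=0+1..n. of_nat (M j) * C j) = of_nat (M k) * C k + ?T * C (k+1)"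
    using k lead(2) by (intro weighted_tail_sum_eq const) auto
  with lin have tail_lin: "of_nat (M k) * C k + ?T * C (k+1) = 0"
    by simp
  show T_nz: "?T \<noteq> 0"
  proof
    assume "?T = 0"
    with tail_lin have "of_nat (M k) * C k = 0" by simp
    with M_nz k lead(1) show False by auto
  qed
  then show "k \<in> {1..n-1}"
    using k by (cases "k = n") auto
  from tail_lin T_nz have C_succ: "C (k+1) = - of_nat (M k) / ?T * C k"
    by (simp add: field_simps eq_neg_iff_add_eq_0)
  show "C = (\<lambda>a. C k * canonical_vec n M k a)"
  proof
    fix l
    consider "l < k" | "l = k" | "k < l" "l \<le> n" | "n < l"
      by linarith
    then show "C l = C k * canonical_vec n M k l"
    proof cases
      case 3
      then have "C l = C (k+1)" by (rule const)
      with 3 C_succ show ?thesis by (simp add: canonical_vec_def)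
    next
      case 4
      then show ?thesis
        using C k by (auto simp: canonical_vec_def vecs_def)
    qed (use lead in \<open>auto simp: canonical_vec_def\<close>)
  qed
qed

lemma admissible_pair_scaling_of_canonical:
  assumes M_nz: "\<forall>i\<in>{1..n}. (of_nat (M i) :: 'f::field) \<noteq> 0"
    and adm: "(C, d) \<in> (admissible_pairs n M :: ((nat \<Rightarrow> 'f) \<times> _) set)"
  obtains k where "k \<in> {1..n-1}" "(tail_weight n M k :: 'f) \<noteq> 0"
    and "((canonical_vec n M k, canonical_eigs n M k), (C, d)) \<in> scaling_rel n M"
proof -
  from adm obtain a where "C a \<noteq> 0"
    by (auto simp: admissible_pairs_def)
  define k where "k = (LEAST a. C a \<noteq> 0)"
  have lead: "C k \<noteq> 0" "\<forall>l<k. C l = 0"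
    using LeastI[of "\<lambda>a. C a \<noteq> 0", OF \<open>C a \<noteq> 0\<close>] not_less_Least k_def by auto
  note form = admissible_pair_canonical_form[OF M_nz adm lead]
  have canonical: "(canonical_vec n M k, canonical_eigs n M k :: nat \<Rightarrow> 'f) \<in> admissible_pairs n M"
    by (rule canonical_pair_admissible[OF M_nz form(1,2)])
  have "((\<lambda>a. C k * canonical_vec n M k a), canonical_eigs n M k) \<in> admissible_pairs n M"
    by (rule admissible_pairs_scaled[OF canonical lead(1)])
  then have "(C, canonical_eigs n M k) \<in> admissible_pairs n M"
    by (simp only: form(3)[symmetric])
  with adm have "d = canonical_eigs n M k"
    by (rule admissible_pairs_eigenvalues_unique)
  with canonical adm form(3) lead(1)
  have "((canonical_vec n M k, canonical_eigs n M k), (C, d)) \<in> scaling_rel n M"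
    unfolding scaling_rel_def by blast
  with form(1,2) show thesis
    by (rule that)
qed

lemma canonical_vec_scaled_eq_imp_eq:
  assumes "(\<lambda>a. c * canonical_vec n M k a) = (canonical_vec n M k' :: nat \<Rightarrow> 'f::field)"
  shows "k = k'"
proof -
  have "c * canonical_vec n M k k' = 1" and "c = canonical_vec n M k' k"
    using fun_cong[OF assms, of k'] fun_cong[OF assms, of k] by (simp_all add: canonical_vec_def)
  then have "canonical_vec n M k k' \<noteq> (0 :: 'f)" "canonical_vec n M k' k \<noteq> (0 :: 'f)"
    by auto
  then show ?thesis
    by (auto simp: canonical_vec_def split: if_splits)
qed

lemma card_admissible_classes:
  assumes M_nz: "\<forall>i\<in>{1..n}. (of_nat (M i) :: 'f::field) \<noteq> 0"
  shows "card ((admissible_pairs n M :: ((nat \<Rightarrow> 'f) \<times> _) set) // scaling_rel n M)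
       = card {k \<in> {1..n-1}. (tail_weight n M k :: 'f) \<noteq> 0}"
proof -
  let ?A = "admissible_pairs n M :: ((nat \<Rightarrow> 'f) \<times> (nat \<Rightarrow> 'f)) set"
    and ?R = "scaling_rel n M :: (((nat \<Rightarrow> 'f) \<times> (nat \<Rightarrow> 'f)) \<times> _) set"
  let ?K = "{k \<in> {1..n-1}. (tail_weight n M k :: 'f) \<noteq> 0}"
  define canonical_class where "canonical_class k = ?R `` {(canonical_vec n M k, canonical_eigs n M k)}" for k :: nat
  have canonical: "(canonical_vec n M k, canonical_eigs n M k) \<in> ?A" if "k \<in> ?K" for k
    using canonical_pair_admissible[OF M_nz] that by auto
  have "bij_betw canonical_class ?K (?A // ?R)"
  proof (rule bij_betw_imageI)
    show "inj_on canonical_class ?K"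
    proof (rule inj_onI)
      fix k k' assume "k \<in> ?K" "k' \<in> ?K" "canonical_class k = canonical_class k'"
      then have "((canonical_vec n M k, canonical_eigs n M k),
                  (canonical_vec n M k', canonical_eigs n M k')) \<in> ?R"
        unfolding canonical_class_def
        using eq_equiv_class_iff[OF equiv_scaling_rel canonical canonical] by simp
      then obtain c where "(\<lambda>a. c * canonical_vec n M k a) = (canonical_vec n M k' :: nat \<Rightarrow> 'f)"
        unfolding scaling_rel_def by auto
      then show "k = k'"
        by (rule canonical_vec_scaled_eq_imp_eq)
    qed
    show "canonical_class ` ?K = ?A // ?R"
    proof
      show "canonical_class ` ?K \<subseteq> ?A // ?R"
        unfolding canonical_class_def using canonical by (auto intro: quotientI)
      show "?A // ?R \<subseteq> canonical_class ` ?K"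
      proof
        fix X assume "X \<in> ?A // ?R"
        then obtain C d where adm: "(C, d) \<in> ?A" and X: "X = ?R `` {(C, d)}"
          by (auto elim: quotientE)
        obtain k where "k \<in> ?K"
          and "((canonical_vec n M k, canonical_eigs n M k), (C, d)) \<in> ?R"
          using admissible_pair_scaling_of_canonical[OF M_nz adm] by auto
        then show "X \<in> canonical_class ` ?K"
          unfolding X canonical_class_def using equiv_class_eq[OF equiv_scaling_rel] by blast
      qed
    qed
  qed
  then show ?thesis
    by (rule bij_betw_same_card[symmetric])
qed

lemma card_tail_weight_nonzero:
  assumes n: "n \<ge> 2" and M_n: "(of_nat (M n) :: 'f::comm_ring_1) \<noteq> 0"
  shows "card {k \<in> {1..n-1}. (tail_weight n M k :: 'f) \<noteq> 0}
       + card {i. 1 \<le> i \<and> i \<le> n - 2 \<and> (tail_weight n M i :: 'f) = 0} = n - 1"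
proof -
  let ?K = "{k \<in> {1..n-1}. (tail_weight n M k :: 'f) \<noteq> 0}"
  let ?Z = "{i. 1 \<le> i \<and> i \<le> n - 2 \<and> (tail_weight n M i :: 'f) = 0}"
  have "{n - 1 + 1..n} = {n}"
    using n by auto
  with M_n have T_last: "(tail_weight n M (n - 1) :: 'f) \<noteq> 0"
    by simp
  have "{1..n-1} \<subseteq> ?K \<union> ?Z"
  proof
    fix i assume i: "i \<in> {1..n-1}"
    show "i \<in> ?K \<union> ?Z"
    proof (cases "(tail_weight n M i :: 'f) = 0")
      case True
      with T_last have "i \<noteq> n - 1" by auto
      with i True show ?thesis by auto
    qed (use i in auto)
  qed
  then have "?K \<union> ?Z = {1..n-1}"
    by auto
  moreover have "?K \<inter> ?Z = {}"
    by auto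
  ultimately show ?thesis
    using card_Un_disjoint[of ?K ?Z] by simp
qed

lemma of_nat_mod_ring_neq_0:
  assumes "0 < m" "m < CARD('p::prime_card)"
  shows "(of_nat m :: 'p mod_ring) \<noteq> 0"
proof
  assume "(of_nat m :: 'p mod_ring) = 0"
  then have "CARD('p) dvd m"
    by (rule of_nat_0_mod_ring_dvd)
  with assms show False
    by (auto dest: dvd_imp_le)
qed

theorem corollary5p6:
  fixes M :: "nat \<Rightarrow> nat" and n :: nat
  assumes p_odd: "CARD('p::prime_card) \<noteq> 2"
    and n_ge: "n \<ge> 2"
    and M_range: "\<forall>i\<in>{1..n}. 1 \<le> M i \<and> M i \<le> CARD('p) - 1"
  shows "(\<forall>C d d'. (C, d) \<in> (admissible_pairs n M :: (_ \<times> (nat \<Rightarrow> 'p mod_ring)) set)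
                 \<and> (C, d') \<in> admissible_pairs n M \<longrightarrow> d = d')
       \<and> (\<forall>C d (c :: 'p mod_ring). (C, d) \<in> admissible_pairs n M \<and> c \<noteq> 0
                 \<longrightarrow> ((\<lambda>a. c * C a), d) \<in> admissible_pairs n M)
       \<and> int (card ((admissible_pairs n M :: (_ \<times> (nat \<Rightarrow> 'p mod_ring)) set) // scaling_rel n M))
           = int n - 1 - int (card {i. 1 \<le> i \<and> i \<le> n - 2
                 \<and> (\<Sum>j=i+1..n. (of_nat (M j) :: 'p mod_ring)) = 0})"
proof -
  have M_nz: "\<forall>i\<in>{1..n}. (of_nat (M i) :: 'p mod_ring) \<noteq> 0"
  proof
    fix i assume "i \<in> {1..n}"
    with M_range have "0 < M i" "M i < CARD('p)"
      by force+
    then show "(of_nat (M i) :: 'p mod_ring) \<noteq> 0"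
      by (rule of_nat_mod_ring_neq_0)
  qed
  have "card ((admissible_pairs n M :: (_ \<times> (nat \<Rightarrow> 'p mod_ring)) set) // scaling_rel n M)
      = card {k \<in> {1..n-1}. (tail_weight n M k :: 'p mod_ring) \<noteq> 0}"
    by (rule card_admissible_classes[OF M_nz])
  moreover have "card {k \<in> {1..n-1}. (tail_weight n M k :: 'p mod_ring) \<noteq> 0}
      + card {i. 1 \<le> i \<and> i \<le> n - 2 \<and> (tail_weight n M i :: 'p mod_ring) = 0} = n - 1"
    using n_ge M_nz by (intro card_tail_weight_nonzero) auto
  ultimately have "int (card ((admissible_pairs n M :: (_ \<times> (nat \<Rightarrow> 'p mod_ring)) set)
        // scaling_rel n M)) = int n - 1 - int (card {i. 1 \<le> i \<and> i \<le> n - 2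
          \<and> (\<Sum>j=i+1..n. (of_nat (M j) :: 'p mod_ring)) = 0})"
    using n_ge by linarith
  then show ?thesis
    using admissible_pairs_eigenvalues_unique admissible_pairs_scaled by blast
qed

end
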